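(* $\mathbb A(\infty)$ is completely isomorphic to $C\otimes\mathbb A(\infty)$, where $C$ is the column Hilbert space and $\otimes$ the spatial tensor product.
   Context: $P_\infty$ is the free semigroup on countably many letters (including the empty word), $\ell_2(P_\infty)$ has orthonormal basis $\{\delta_x\}$, $L_x\delta_y=\delta_{xy}$, and $\mathbb A(\infty)$ is the norm closure of $\mathrm{span}\{L_x\}$ in $B(\ell_2(P_\infty))$. The column Hilbert space $C$ is the closed span of the matrix units $\{e_{i1}:i\in\mathbb N\}$ in $B(\ell_2)$. For operator spaces $X\subseteq B(H)$, $Y\subseteq B(L)$, $X\otimes Y$ is the closure of the algebraic tensor product in $B(H\otimes_2L)$. Completely isomorphic means related by a linear bijection which is completely bounded with completely bounded inverse. *)

theory Defs
  imports Complex_Main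
begin

text \<open>Bounded operators on the Hilbert space ell2(I) are represented by their
matrices T i j = <T delta_j, delta_i>; this representation is faithful.
A matrix is bounded iff it is bounded on finitely supported vectors.\<close>

type_synonym 'i mat = "'i \<Rightarrow> 'i \<Rightarrow> complex"

definition norm_bound :: "'i mat \<Rightarrow> real \<Rightarrow> bool" where
  "norm_bound T M \<longleftrightarrow> M \<ge> 0 \<and>
     (\<forall>S F (f::'i \<Rightarrow> complex). finite S \<longrightarrow> finite F \<longrightarrow>
        (\<Sum>i\<in>F. (cmod (\<Sum>j\<in>S. T i j * f j))\<^sup>2) \<le> M\<^sup>2 * (\<Sum>j\<in>S. (cmod (f j))\<^sup>2))"

definition bounded_mat :: "'i mat \<Rightarrow> bool" where
  "bounded_mat T \<longleftrightarrow> (\<exists>M. norm_bound T M)"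

definition opnorm :: "'i mat \<Rightarrow> real" where
  "opnorm T = Inf {M. norm_bound T M}"

definition mdiff :: "'i mat \<Rightarrow> 'i mat \<Rightarrow> 'i mat" where
  "mdiff A B = (\<lambda>i j. A i j - B i j)"

definition mspan :: "'i mat set \<Rightarrow> 'i mat set" where
  "mspan S = {T. \<exists>F c. finite F \<and> F \<subseteq> S \<and> T = (\<lambda>i j. \<Sum>m\<in>F. c m * m i j)}"

definition mclosure :: "'i mat set \<Rightarrow> 'i mat set" where
  "mclosure S = {T. bounded_mat T \<and>
     (\<exists>s. (\<forall>n. s n \<in> S) \<and> (\<lambda>n. opnorm (mdiff (s n) T)) \<longlonglongrightarrow> 0)}"

text \<open>n-th matrix amplification: an n x n matrix of operators on ell2(I),
as an operator on ell2(I x {0..<n}) (embedded in ell2(I x nat)).\<close>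
definition amp :: "nat \<Rightarrow> (nat \<Rightarrow> nat \<Rightarrow> 'i mat) \<Rightarrow> ('i \<times> nat) mat" where
  "amp n x = (\<lambda>(i,k) (j,l). if k < n \<and> l < n then x k l i j else 0)"

definition completely_bounded :: "('i mat \<Rightarrow> 'j mat) \<Rightarrow> 'i mat set \<Rightarrow> bool" where
  "completely_bounded \<phi> X \<longleftrightarrow> (\<exists>K. \<forall>n x. (\<forall>k l. k < n \<longrightarrow> l < n \<longrightarrow> x k l \<in> X) \<longrightarrow>
      opnorm (amp n (\<lambda>k l. \<phi> (x k l))) \<le> K * opnorm (amp n x))"

definition complex_linear_on :: "('i mat \<Rightarrow> 'j mat) \<Rightarrow> 'i mat set \<Rightarrow> bool" where
  "complex_linear_on \<phi> X \<longleftrightarrow> (\<forall>x\<in>X. \<forall>y\<in>X. \<forall>a b.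
      \<phi> (\<lambda>i j. a * x i j + b * y i j) = (\<lambda>i j. a * \<phi> x i j + b * \<phi> y i j))"

definition completely_isomorphic :: "'i mat set \<Rightarrow> 'j mat set \<Rightarrow> bool" where
  "completely_isomorphic X Y \<longleftrightarrow> (\<exists>\<phi>. bij_betw \<phi> X Y \<and> complex_linear_on \<phi> X \<and>
      completely_bounded \<phi> X \<and> completely_bounded (inv_into X \<phi>) Y)"

definition kron :: "'i mat \<Rightarrow> 'j mat \<Rightarrow> ('i \<times> 'j) mat" where
  "kron a b = (\<lambda>(i,i') (j,j'). a i j * b i' j')"

definition spatial_tensor :: "'i mat set \<Rightarrow> 'j mat set \<Rightarrow> ('i \<times> 'j) mat set" where
  "spatial_tensor X Y = mclosure (mspan {kron a b | a b. a \<in> X \<and> b \<in> Y})"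

text \<open>P_infinity = words (lists) over the letters nat; L_x delta_y = delta_{xy}.\<close>
definition Lop :: "nat list \<Rightarrow> nat list mat" where
  "Lop x = (\<lambda>w v. if w = x @ v then 1 else 0)"

definition A_inf :: "nat list mat set" where
  "A_inf = mclosure (mspan (range Lop))"

text \<open>Column Hilbert space: closed span of e_{i1} (first column; index 1 is 0 here).\<close>
definition unit_mat :: "nat \<Rightarrow> nat \<Rightarrow> nat mat" where
  "unit_mat a b = (\<lambda>i j. if i = a \<and> j = b then 1 else 0)"

definition column_space :: "nat mat set" where
  "column_space = mclosure (mspan {unit_mat i 0 | i. True})"

end

theory Submission
  imports Defs "HOL-Analysis.L2_Norm"
begin

(* Index words by pairs: word_of_pair is a bijection N x P_inf -> P_inf with
   word_of_pair (i, y @ v) = word_of_pair (i, y) @ v unless (i, y) = (0, []).  Relabelling rows by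
   it therefore turns L_x, for x = word_of_pair (i, y), into e_i0 (x) L_y, except that L_[] = 1 has
   to become e_00 (x) 1; this correction involves only the entry a [] [] of the matrix a being
   mapped.  Hence the isomorphism and its inverse are sums of three compressions V^* (T (x) 1) U by
   partial isometries, so they are defined and completely bounded on all matrices.  They map
   generators to generators, hence the closed spans into each other, and they are mutually inverse
   there because the entries they ignore vanish on A(inf) and on C (x) A(inf). *)

section \<open>Norm bounds of matrices\<close>

lemma norm_bound_nonneg: "norm_bound T M \<Longrightarrow> 0 \<le> M"
  by (simp add: norm_bound_def)

lemma norm_boundD: "norm_bound T M \<Longrightarrow> finite S \<Longrightarrow> finite F \<Longrightarrow>
    (\<Sum>i\<in>F. (cmod (\<Sum>j\<in>S. T i j * f j))\<^sup>2) \<le> M\<^sup>2 * (\<Sum>j\<in>S. (cmod (f j))\<^sup>2)"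
  by (simp add: norm_bound_def)

lemma norm_boundI: "0 \<le> M \<Longrightarrow> (\<And>S F f. finite S \<Longrightarrow> finite F \<Longrightarrow>
    (\<Sum>i\<in>F. (cmod (\<Sum>j\<in>S. T i j * f j))\<^sup>2) \<le> M\<^sup>2 * (\<Sum>j\<in>S. (cmod (f j))\<^sup>2)) \<Longrightarrow> norm_bound T M"
  by (simp add: norm_bound_def)

lemma norm_bound_L2_set:
  "norm_bound T M \<longleftrightarrow> 0 \<le> M \<and> (\<forall>S F f. finite S \<longrightarrow> finite F \<longrightarrow>
     L2_set (\<lambda>i. cmod (\<Sum>j\<in>S. T i j * f j)) F \<le> M * L2_set (\<lambda>j. cmod (f j)) S)"
proof (cases "0 \<le> M")
  case True
  have "sqrt X \<le> M * sqrt Y \<longleftrightarrow> X \<le> M\<^sup>2 * Y" if "0 \<le> Y" for X Y :: real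
  proof -
    have "M * sqrt Y = sqrt (M\<^sup>2 * Y)"
      using True by (simp add: real_sqrt_mult)
    then show ?thesis
      using real_sqrt_le_iff by presburger
  qed
  then have "L2_set (\<lambda>i. cmod (\<Sum>j\<in>S. T i j * f j)) F \<le> M * L2_set (\<lambda>j. cmod (f j)) S
      \<longleftrightarrow> (\<Sum>i\<in>F. (cmod (\<Sum>j\<in>S. T i j * f j))\<^sup>2) \<le> M\<^sup>2 * (\<Sum>j\<in>S. (cmod (f j))\<^sup>2)" for S F f
    unfolding L2_set_def by (simp add: sum_nonneg)
  with True show ?thesis
    unfolding norm_bound_def by presburger
qed (simp add: norm_bound_def)

lemma norm_bound_L2_setD:
  "norm_bound T M \<Longrightarrow> finite S \<Longrightarrow> finite F \<Longrightarrow>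
    L2_set (\<lambda>i. cmod (\<Sum>j\<in>S. T i j * f j)) F \<le> M * L2_set (\<lambda>j. cmod (f j)) S"
  by (simp add: norm_bound_L2_set)

lemma opnorm_le: "norm_bound T M \<Longrightarrow> opnorm T \<le> M"
  unfolding opnorm_def by (rule cInf_lower) (auto intro: bdd_belowI[where m=0] norm_bound_nonneg)

lemma opnorm_nonneg: "bounded_mat T \<Longrightarrow> 0 \<le> opnorm T"
  unfolding opnorm_def bounded_mat_def by (rule cInf_greatest) (auto intro: norm_bound_nonneg)

lemma norm_bound_opnorm:
  assumes "bounded_mat T"
  shows "norm_bound T (opnorm T)"
  unfolding norm_bound_L2_set
proof (intro conjI allI impI)
  show "0 \<le> opnorm T"
    using assms by (rule opnorm_nonneg)
  fix S F :: "'a set" and f :: "'a \<Rightarrow> complex"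
  assume fin: "finite S" "finite F"
  define X where "X = L2_set (\<lambda>i. cmod (\<Sum>j\<in>S. T i j * f j)) F"
  define Y where "Y = L2_set (\<lambda>j. cmod (f j)) S"
  have bound: "X \<le> M * Y" if "norm_bound T M" for M
    using norm_bound_L2_setD[OF that fin] unfolding X_def Y_def .
  obtain M0 where M0: "norm_bound T M0"
    using assms bounded_mat_def by blast
  have "X \<le> opnorm T * Y"
  proof (cases "Y = 0")
    case True
    then show ?thesis
      using bound[OF M0] by simp
  next
    case False
    then have Y: "0 < Y"
      unfolding Y_def using L2_set_nonneg order_less_le by metis
    have "X / Y \<le> opnorm T"
      unfolding opnorm_def
      by (rule cInf_greatest) (use M0 bound Y in \<open>auto simp: divide_le_eq\<close>)
    then show ?thesis
      using Y by (simp add: divide_le_eq)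
  qed
  then show "L2_set (\<lambda>i. cmod (\<Sum>j\<in>S. T i j * f j)) F \<le> opnorm T * L2_set (\<lambda>j. cmod (f j)) S"
    unfolding X_def Y_def .
qed

lemma norm_bound_add:
  fixes A B :: "'a mat"
  assumes "norm_bound A M1" and "norm_bound B M2"
  shows "norm_bound (\<lambda>i j. A i j + B i j) (M1 + M2)"
  unfolding norm_bound_L2_set
proof (intro conjI allI impI)
  show "0 \<le> M1 + M2"
    using assms[THEN norm_bound_nonneg] by simp
  fix S F :: "'a set" and f :: "'a \<Rightarrow> complex"
  assume fin: "finite S" "finite F"
  have "L2_set (\<lambda>i. cmod (\<Sum>j\<in>S. (A i j + B i j) * f j)) F
      \<le> L2_set (\<lambda>i. cmod (\<Sum>j\<in>S. A i j * f j) + cmod (\<Sum>j\<in>S. B i j * f j)) F"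
    by (rule L2_set_mono) (simp_all add: distrib_right sum.distrib norm_triangle_ineq)
  also have "\<dots> \<le> L2_set (\<lambda>i. cmod (\<Sum>j\<in>S. A i j * f j)) F + L2_set (\<lambda>i. cmod (\<Sum>j\<in>S. B i j * f j)) F"
    by (rule L2_set_triangle_ineq)
  also have "\<dots> \<le> M1 * L2_set (\<lambda>j. cmod (f j)) S + M2 * L2_set (\<lambda>j. cmod (f j)) S"
    using assms[THEN norm_bound_L2_setD, OF fin] by (rule add_mono)
  finally show "L2_set (\<lambda>i. cmod (\<Sum>j\<in>S. (A i j + B i j) * f j)) F \<le> (M1 + M2) * L2_set (\<lambda>j. cmod (f j)) S"
    by (simp add: distrib_right)
qed

lemma norm_bound_scale:
  fixes A :: "'a mat"
  assumes "norm_bound A M"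
  shows "norm_bound (\<lambda>i j. c * A i j) (cmod c * M)"
  unfolding norm_bound_L2_set
proof (intro conjI allI impI)
  show "0 \<le> cmod c * M"
    using assms[THEN norm_bound_nonneg] by simp
  fix S F :: "'a set" and f :: "'a \<Rightarrow> complex"
  assume fin: "finite S" "finite F"
  have "(\<Sum>j\<in>S. c * A i j * f j) = c * (\<Sum>j\<in>S. A i j * f j)" for i
    by (simp add: sum_distrib_left mult.assoc)
  then have "L2_set (\<lambda>i. cmod (\<Sum>j\<in>S. c * A i j * f j)) F = cmod c * L2_set (\<lambda>i. cmod (\<Sum>j\<in>S. A i j * f j)) F"
    by (simp add: L2_set_right_distrib norm_mult)
  also have "\<dots> \<le> cmod c * (M * L2_set (\<lambda>j. cmod (f j)) S)"
    using norm_bound_L2_setD[OF assms fin] by (simp add: mult_left_mono)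
  finally show "L2_set (\<lambda>i. cmod (\<Sum>j\<in>S. c * A i j * f j)) F \<le> cmod c * M * L2_set (\<lambda>j. cmod (f j)) S"
    by (simp add: mult.assoc)
qed

lemma norm_bound_mdiff:
  "norm_bound A M1 \<Longrightarrow> norm_bound B M2 \<Longrightarrow> norm_bound (mdiff A B) (M1 + M2)"
  using norm_bound_add[OF _ norm_bound_scale[of B M2 "-1"]] by (simp add: mdiff_def)

lemma norm_bound_zero: "norm_bound (\<lambda>i j. 0) 0"
  by (rule norm_boundI) auto

lemma opnorm_zero: "opnorm (\<lambda>i j. 0) = 0"
proof (rule antisym)
  show "opnorm (\<lambda>i j. 0) \<le> 0"
    by (rule opnorm_le[OF norm_bound_zero])
  show "0 \<le> opnorm (\<lambda>i j. 0)"
    by (rule opnorm_nonneg) (use norm_bound_zero bounded_mat_def in blast)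
qed

lemma norm_bound_column: "norm_bound A M \<Longrightarrow> finite I \<Longrightarrow> (\<Sum>i\<in>I. (cmod (A i j))\<^sup>2) \<le> M\<^sup>2"
  using norm_boundD[of A M "{j}" I "\<lambda>_. 1"] by simp

lemma norm_bound_entry: "norm_bound A M \<Longrightarrow> cmod (A i j) \<le> M"
  using norm_boundD[of A M "{j}" "{i}" "\<lambda>_. 1"] norm_bound_nonneg[of A M]
  by (simp add: abs_le_square_iff)

lemma bounded_mat_scale: "bounded_mat A \<Longrightarrow> bounded_mat (\<lambda>i j. c * A i j)"
  unfolding bounded_mat_def using norm_bound_scale by blast

lemma bounded_mat_lincomb:
  "bounded_mat A \<Longrightarrow> bounded_mat B \<Longrightarrow> bounded_mat (\<lambda>i j. a * A i j + b * B i j)"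
  unfolding bounded_mat_def using norm_bound_add[OF norm_bound_scale norm_bound_scale] by blast

lemma bounded_mat_mdiff: "bounded_mat A \<Longrightarrow> bounded_mat B \<Longrightarrow> bounded_mat (mdiff A B)"
  unfolding bounded_mat_def using norm_bound_mdiff by blast

lemma opnorm_mdiff_triangle:
  assumes "bounded_mat A" "bounded_mat B" "bounded_mat C"
  shows "opnorm (mdiff A C) \<le> opnorm (mdiff A B) + opnorm (mdiff B C)"
proof -
  have "norm_bound (\<lambda>i j. mdiff A B i j + mdiff B C i j) (opnorm (mdiff A B) + opnorm (mdiff B C))"
    by (intro norm_bound_add norm_bound_opnorm bounded_mat_mdiff assms)
  moreover have "(\<lambda>i j. mdiff A B i j + mdiff B C i j) = mdiff A C"
    by (simp add: mdiff_def)
  ultimately show ?thesis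
    by (simp add: opnorm_le)
qed

lemma bounded_mat_sum:
  "finite F \<Longrightarrow> (\<And>m. m \<in> F \<Longrightarrow> bounded_mat (G m)) \<Longrightarrow> bounded_mat (\<lambda>i j. \<Sum>m\<in>F. G m i j)"
proof (induction F rule: finite_induct)
  case empty
  then show ?case using norm_bound_zero bounded_mat_def by auto
next
  case (insert m F)
  then show ?case
    using bounded_mat_lincomb[of "G m" "\<lambda>i j. \<Sum>m\<in>F. G m i j" 1 1] by simp
qed

definition id_mat :: "'i mat" where
  "id_mat = (\<lambda>i j. if i = j then 1 else 0)"

lemma norm_bound_id_mat: "norm_bound id_mat 1"
proof (rule norm_boundI)
  fix S F :: "'i set" and f :: "'i \<Rightarrow> complex"
  assume fin: "finite S" "finite F"
  have "(\<Sum>j\<in>S. id_mat i j * f j) = (if i \<in> S then f i else 0)" for i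
    using fin by (simp add: id_mat_def if_distrib[of "\<lambda>x. x * _"] sum.delta cong: if_cong)
  then have "(\<Sum>i\<in>F. (cmod (\<Sum>j\<in>S. id_mat i j * f j))\<^sup>2) = (\<Sum>i\<in>F \<inter> S. (cmod (f i))\<^sup>2)"
    using fin by (simp add: sum.inter_restrict if_distrib[of "\<lambda>x. (cmod x)\<^sup>2"] cong: if_cong)
  also have "\<dots> \<le> (\<Sum>j\<in>S. (cmod (f j))\<^sup>2)"
    using fin by (intro sum_mono2) auto
  finally show "(\<Sum>i\<in>F. (cmod (\<Sum>j\<in>S. id_mat i j * f j))\<^sup>2) \<le> 1\<^sup>2 * (\<Sum>j\<in>S. (cmod (f j))\<^sup>2)"
    by simp
qed simp

section \<open>Compressions\<close>

definition reindex_mat :: "'p set \<Rightarrow> 'p set \<Rightarrow> ('p \<Rightarrow> 'i) \<Rightarrow> ('p \<Rightarrow> 'i) \<Rightarrow> 'i mat \<Rightarrow> 'p mat" where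
  "reindex_mat P Q \<sigma> \<tau> T = (\<lambda>p q. if p \<in> P \<and> q \<in> Q then T (\<sigma> p) (\<tau> q) else 0)"

lemma norm_bound_reindex_mat:
  fixes T :: "'i mat" and P Q :: "'p set"
  assumes inj: "inj_on \<sigma> P" "inj_on \<tau> Q" and T: "norm_bound T M"
  shows "norm_bound (reindex_mat P Q \<sigma> \<tau> T) M"
proof (rule norm_boundI)
  show "0 \<le> M"
    using T by (rule norm_bound_nonneg)
  fix S F :: "'p set" and f :: "'p \<Rightarrow> complex"
  assume fin: "finite S" "finite F"
  define g where "g j = f (inv_into (S \<inter> Q) \<tau> j)" for j
  have inj_S: "inj_on \<tau> (S \<inter> Q)" and inj_F: "inj_on \<sigma> (F \<inter> P)"
    using inj by (auto intro: inj_on_subset)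
  have row: "(\<Sum>q\<in>S. reindex_mat P Q \<sigma> \<tau> T p q * f q) = (\<Sum>j\<in>\<tau> ` (S \<inter> Q). T (\<sigma> p) j * g j)"
    if "p \<in> P" for p
  proof -
    have "(\<Sum>q\<in>S. reindex_mat P Q \<sigma> \<tau> T p q * f q) = (\<Sum>q\<in>S \<inter> Q. T (\<sigma> p) (\<tau> q) * g (\<tau> q))"
      using that fin inj_S unfolding reindex_mat_def g_def
      by (auto simp: sum.inter_restrict inv_into_f_f intro!: sum.cong)
    also have "\<dots> = (\<Sum>j\<in>\<tau> ` (S \<inter> Q). T (\<sigma> p) j * g j)"
      using inj_S by (simp add: sum.reindex)
    finally show ?thesis .
  qed
  have "(\<Sum>p\<in>F. (cmod (\<Sum>q\<in>S. reindex_mat P Q \<sigma> \<tau> T p q * f q))\<^sup>2)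
      = (\<Sum>p\<in>F \<inter> P. (cmod (\<Sum>j\<in>\<tau> ` (S \<inter> Q). T (\<sigma> p) j * g j))\<^sup>2)"
    using fin row by (auto simp: reindex_mat_def sum.inter_restrict intro!: sum.cong)
  also have "\<dots> = (\<Sum>i\<in>\<sigma> ` (F \<inter> P). (cmod (\<Sum>j\<in>\<tau> ` (S \<inter> Q). T i j * g j))\<^sup>2)"
    using inj_F by (simp add: sum.reindex)
  also have "\<dots> \<le> M\<^sup>2 * (\<Sum>j\<in>\<tau> ` (S \<inter> Q). (cmod (g j))\<^sup>2)"
    using fin by (intro norm_boundD[OF T]) auto
  also have "(\<Sum>j\<in>\<tau> ` (S \<inter> Q). (cmod (g j))\<^sup>2) = (\<Sum>q\<in>S \<inter> Q. (cmod (f q))\<^sup>2)"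
    using inj_S by (simp add: sum.reindex g_def inv_into_f_f)
  also have "\<dots> \<le> (\<Sum>q\<in>S. (cmod (f q))\<^sup>2)"
    using fin by (intro sum_mono2) auto
  finally show "(\<Sum>p\<in>F. (cmod (\<Sum>q\<in>S. reindex_mat P Q \<sigma> \<tau> T p q * f q))\<^sup>2) \<le> M\<^sup>2 * (\<Sum>q\<in>S. (cmod (f q))\<^sup>2)"
    by (simp add: mult_left_mono)
qed

lemma sum_snd_fiber:
  assumes "finite S"
  shows "(\<Sum>y\<in>S. if snd y = k then G (fst y) else 0) = (\<Sum>j\<in>fst ` S. if (j, k) \<in> S then G j else 0)"
proof -
  have "(\<Sum>j\<in>fst ` S. if (j, k) \<in> S then G j else 0) = (\<Sum>j\<in>{j. (j, k) \<in> S}. G j)"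
    using assms by (intro sum.mono_neutral_cong_right) (auto intro: rev_image_eqI)
  also have "\<dots> = (\<Sum>y\<in>{y\<in>S. snd y = k}. G (fst y))"
    by (rule sum.reindex_cong[where l=fst]) (auto simp: inj_on_def image_iff prod_eq_iff)
  also have "\<dots> = (\<Sum>y\<in>S. if snd y = k then G (fst y) else 0)"
    using assms by (simp add: sum.inter_filter)
  finally show ?thesis ..
qed

lemma sum_fst_fiber:
  assumes "finite S"
  shows "(\<Sum>y\<in>S. if fst y = k then G (snd y) else 0) = (\<Sum>j\<in>snd ` S. if (k, j) \<in> S then G j else 0)"
proof -
  have "(\<Sum>j\<in>snd ` S. if (k, j) \<in> S then G j else 0) = (\<Sum>j\<in>{j. (k, j) \<in> S}. G j)"
    using assms by (intro sum.mono_neutral_cong_right) (auto intro: rev_image_eqI)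
  also have "\<dots> = (\<Sum>y\<in>{y\<in>S. fst y = k}. G (snd y))"
    by (rule sum.reindex_cong[where l=snd]) (auto simp: inj_on_def image_iff prod_eq_iff)
  also have "\<dots> = (\<Sum>y\<in>S. if fst y = k then G (snd y) else 0)"
    using assms by (simp add: sum.inter_filter)
  finally show ?thesis ..
qed

lemma sum_slice_le:
  assumes "finite S"
  shows "(\<Sum>v\<in>snd ` S. (cmod (if (k, v) \<in> S then f (k, v) else 0))\<^sup>2) \<le> (\<Sum>y\<in>S. (cmod (f y))\<^sup>2)"
proof -
  have "(\<Sum>v\<in>snd ` S. (cmod (if (k, v) \<in> S then f (k, v) else 0))\<^sup>2)
      = (\<Sum>y\<in>S. if fst y = k then (cmod (f (k, snd y)))\<^sup>2 else 0)"
    by (subst sum_fst_fiber[OF assms]) (auto intro!: sum.cong)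
  also have "\<dots> \<le> (\<Sum>y\<in>S. (cmod (f y))\<^sup>2)"
    by (intro sum_mono) (auto simp: prod_eq_iff)
  finally show ?thesis .
qed

lemma norm_bound_sum_blocks:
  assumes T: "norm_bound T M" and fin: "finite J" "finite F"
  shows "(\<Sum>(i, k)\<in>F. (cmod (\<Sum>j\<in>J. T i j * g k j))\<^sup>2)
    \<le> M\<^sup>2 * (\<Sum>k\<in>snd ` F. \<Sum>j\<in>J. (cmod (g k j))\<^sup>2)"
proof -
  have "(\<Sum>(i, k)\<in>F. (cmod (\<Sum>j\<in>J. T i j * g k j))\<^sup>2)
      \<le> (\<Sum>(i, k)\<in>fst ` F \<times> snd ` F. (cmod (\<Sum>j\<in>J. T i j * g k j))\<^sup>2)"
    using fin by (intro sum_mono2) (auto intro: rev_image_eqI)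
  also have "\<dots> = (\<Sum>k\<in>snd ` F. \<Sum>i\<in>fst ` F. (cmod (\<Sum>j\<in>J. T i j * g k j))\<^sup>2)"
    by (simp add: sum.cartesian_product[symmetric] sum.swap[of _ "fst ` F"])
  also have "\<dots> \<le> (\<Sum>k\<in>snd ` F. M\<^sup>2 * (\<Sum>j\<in>J. (cmod (g k j))\<^sup>2))"
    using fin by (intro sum_mono norm_boundD[OF T]) auto
  finally show ?thesis
    by (simp add: sum_distrib_left)
qed

definition tensor_id :: "'i mat \<Rightarrow> ('i \<times> 'k) mat" where
  "tensor_id T = (\<lambda>(i, k) (j, l). if k = l then T i j else 0)"

lemma norm_bound_tensor_id:
  fixes T :: "'i mat"
  assumes T: "norm_bound T M"
  shows "norm_bound (tensor_id T :: ('i \<times> 'k) mat) M"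
proof (rule norm_boundI)
  show "0 \<le> M"
    using T by (rule norm_bound_nonneg)
  fix S F :: "('i \<times> 'k) set" and f :: "'i \<times> 'k \<Rightarrow> complex"
  assume fin: "finite S" "finite F"
  define J where "J = fst ` S"
  define g where "g k j = (if (j, k) \<in> S then f (j, k) else 0)" for k j
  have row: "(\<Sum>y\<in>S. tensor_id T (i, k) y * f y) = (\<Sum>j\<in>J. T i j * g k j)" for i k
  proof -
    have "(\<Sum>y\<in>S. tensor_id T (i, k) y * f y) = (\<Sum>y\<in>S. if snd y = k then T i (fst y) * f (fst y, k) else 0)"
      by (intro sum.cong) (auto simp: tensor_id_def split: prod.splits)
    then show ?thesis
      unfolding J_def by (subst (asm) sum_snd_fiber[OF fin(1)]) (auto simp: g_def intro!: sum.cong)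
  qed
  have "(\<Sum>k\<in>snd ` F. \<Sum>j\<in>J. (cmod (g k j))\<^sup>2) = (\<Sum>y\<in>J \<times> snd ` F. if y \<in> S then (cmod (f y))\<^sup>2 else 0)"
    by (subst sum.swap) (auto simp: sum.cartesian_product g_def intro!: sum.cong)
  also have "\<dots> \<le> (\<Sum>y\<in>S. (cmod (f y))\<^sup>2)"
    using fin unfolding J_def by (simp add: sum.inter_restrict[symmetric] sum_mono2)
  finally have slices: "(\<Sum>k\<in>snd ` F. \<Sum>j\<in>J. (cmod (g k j))\<^sup>2) \<le> (\<Sum>y\<in>S. (cmod (f y))\<^sup>2)" .
  have "(\<Sum>x\<in>F. (cmod (\<Sum>y\<in>S. tensor_id T x y * f y))\<^sup>2) = (\<Sum>(i, k)\<in>F. (cmod (\<Sum>j\<in>J. T i j * g k j))\<^sup>2)"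
    using row by (intro sum.cong) auto
  also have "\<dots> \<le> M\<^sup>2 * (\<Sum>k\<in>snd ` F. \<Sum>j\<in>J. (cmod (g k j))\<^sup>2)"
    using fin unfolding J_def by (intro norm_bound_sum_blocks[OF T]) auto
  also have "\<dots> \<le> M\<^sup>2 * (\<Sum>y\<in>S. (cmod (f y))\<^sup>2)"
    using slices by (rule mult_left_mono) simp
  finally show "(\<Sum>x\<in>F. (cmod (\<Sum>y\<in>S. tensor_id T x y * f y))\<^sup>2) \<le> M\<^sup>2 * (\<Sum>y\<in>S. (cmod (f y))\<^sup>2)" .
qed

text \<open>For \<sigma>, \<tau> injective on P, Q this is \<open>V\<^sup>* (T \<otimes> 1) U\<close> with the partial isometries
  \<open>U \<delta>\<^sub>q = \<delta>\<^bsub>\<tau> q\<^esub>\<close> (q \<in> Q) and \<open>V \<delta>\<^sub>p = \<delta>\<^bsub>\<sigma> p\<^esub>\<close> (p \<in> P).\<close>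

definition compress :: "'p set \<Rightarrow> 'p set \<Rightarrow> ('p \<Rightarrow> 'i \<times> 'k) \<Rightarrow> ('p \<Rightarrow> 'i \<times> 'k) \<Rightarrow> 'i mat \<Rightarrow> 'p mat" where
  "compress P Q \<sigma> \<tau> T = reindex_mat P Q \<sigma> \<tau> (tensor_id T)"

lemma compress_apply:
  "compress P Q \<sigma> \<tau> T p q =
     (if p \<in> P \<and> q \<in> Q \<and> snd (\<sigma> p) = snd (\<tau> q) then T (fst (\<sigma> p)) (fst (\<tau> q)) else 0)"
  by (simp add: compress_def reindex_mat_def tensor_id_def split: prod.splits)

lemma norm_bound_compress:
  "inj_on \<sigma> P \<Longrightarrow> inj_on \<tau> Q \<Longrightarrow> norm_bound T M \<Longrightarrow> norm_bound (compress P Q \<sigma> \<tau> T) M"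
  unfolding compress_def by (intro norm_bound_reindex_mat norm_bound_tensor_id)

lemma amp_compress:
  "amp n (\<lambda>k l. compress P Q \<sigma> \<tau> (x k l)) =
     compress (P \<times> UNIV) (Q \<times> UNIV)
       (\<lambda>(p, k). ((fst (\<sigma> p), k), snd (\<sigma> p))) (\<lambda>(q, l). ((fst (\<tau> q), l), snd (\<tau> q))) (amp n x)"
  by (intro ext) (auto simp: compress_apply amp_def split: prod.splits)

lemma bounded_mat_amp:
  assumes "\<And>k l. k < n \<Longrightarrow> l < n \<Longrightarrow> bounded_mat (x k l)"
  shows "bounded_mat (amp n x)"
proof -
  define E where "E = (\<lambda>(k, l). reindex_mat (UNIV \<times> {k}) (UNIV \<times> {l}) fst fst (x k l))"
  have "amp n x = (\<lambda>p q. \<Sum>m\<in>{..<n} \<times> {..<n}. E m p q)"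
  proof (intro ext)
    fix p q :: "'a \<times> nat"
    have "(\<Sum>m\<in>{..<n} \<times> {..<n}. E m p q) = (\<Sum>m\<in>{..<n} \<times> {..<n}. if m = (snd p, snd q) then x (fst m) (snd m) (fst p) (fst q) else 0)"
      by (intro sum.cong) (auto simp: E_def reindex_mat_def mem_Times_iff split: if_splits)
    then show "amp n x p q = (\<Sum>m\<in>{..<n} \<times> {..<n}. E m p q)"
      by (simp add: amp_def case_prod_beta')
  qed
  moreover have "bounded_mat (E m)" if "m \<in> {..<n} \<times> {..<n}" for m
  proof -
    have "bounded_mat (x (fst m) (snd m))"
      using assms that by (auto simp: mem_Times_iff)
    then obtain M where "norm_bound (x (fst m) (snd m)) M"
      unfolding bounded_mat_def ..
    then have "norm_bound (E m) M"
      unfolding E_def case_prod_beta' by (rule norm_bound_reindex_mat[rotated 2]) (auto simp: inj_on_def)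
    then show ?thesis
      by (auto simp: bounded_mat_def)
  qed
  ultimately show ?thesis
    by (simp add: bounded_mat_sum)
qed

definition completely_bounded_by :: "('i mat \<Rightarrow> 'j mat) \<Rightarrow> real \<Rightarrow> bool" where
  "completely_bounded_by \<Theta> K \<longleftrightarrow>
     (\<forall>n x M. norm_bound (amp n x) M \<longrightarrow> norm_bound (amp n (\<lambda>k l. \<Theta> (x k l))) (K * M))"

lemma completely_bounded_by_compress:
  fixes \<sigma> \<tau> :: "'p \<Rightarrow> 'i \<times> 'k"
  assumes "inj_on \<sigma> P" "inj_on \<tau> Q"
  shows "completely_bounded_by (compress P Q \<sigma> \<tau>) 1"
  unfolding completely_bounded_by_def
proof (intro allI impI)
  fix n :: nat and x :: "nat \<Rightarrow> nat \<Rightarrow> 'i mat" and M :: real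
  assume "norm_bound (amp n x) M"
  moreover have "inj_on (\<lambda>(p, k). ((fst (\<sigma> p), k), snd (\<sigma> p))) (P \<times> UNIV)"
    and "inj_on (\<lambda>(q, l). ((fst (\<tau> q), l), snd (\<tau> q))) (Q \<times> UNIV)"
    using assms by (auto simp: inj_on_def prod_eq_iff)
  ultimately show "norm_bound (amp n (\<lambda>k l. compress P Q \<sigma> \<tau> (x k l))) (1 * M)"
    unfolding amp_compress mult_1 by (intro norm_bound_compress)
qed

lemma completely_bounded_by_add:
  fixes \<Theta> \<Phi> :: "'i mat \<Rightarrow> 'j mat"
  assumes "completely_bounded_by \<Theta> K1" "completely_bounded_by \<Phi> K2"
  shows "completely_bounded_by (\<lambda>T i j. \<Theta> T i j + \<Phi> T i j) (K1 + K2)"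
  unfolding completely_bounded_by_def
proof (intro allI impI)
  fix n :: nat and x :: "nat \<Rightarrow> nat \<Rightarrow> 'i mat" and M :: real
  assume "norm_bound (amp n x) M"
  then have "norm_bound (\<lambda>p q. amp n (\<lambda>k l. \<Theta> (x k l)) p q + amp n (\<lambda>k l. \<Phi> (x k l)) p q) (K1 * M + K2 * M)"
    using assms unfolding completely_bounded_by_def by (blast intro: norm_bound_add)
  moreover have "(\<lambda>p q. amp n (\<lambda>k l. \<Theta> (x k l)) p q + amp n (\<lambda>k l. \<Phi> (x k l)) p q)
      = amp n (\<lambda>k l i j. \<Theta> (x k l) i j + \<Phi> (x k l) i j)"
    by (auto simp: amp_def fun_eq_iff)
  ultimately show "norm_bound (amp n (\<lambda>k l i j. \<Theta> (x k l) i j + \<Phi> (x k l) i j)) ((K1 + K2) * M)"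
    by (simp add: distrib_right)
qed

lemma completely_bounded_by_diff:
  fixes \<Theta> \<Phi> :: "'i mat \<Rightarrow> 'j mat"
  assumes "completely_bounded_by \<Theta> K1" "completely_bounded_by \<Phi> K2"
  shows "completely_bounded_by (\<lambda>T i j. \<Theta> T i j - \<Phi> T i j) (K1 + K2)"
  unfolding completely_bounded_by_def
proof (intro allI impI)
  fix n :: nat and x :: "nat \<Rightarrow> nat \<Rightarrow> 'i mat" and M :: real
  assume "norm_bound (amp n x) M"
  then have "norm_bound (mdiff (amp n (\<lambda>k l. \<Theta> (x k l))) (amp n (\<lambda>k l. \<Phi> (x k l)))) (K1 * M + K2 * M)"
    using assms unfolding completely_bounded_by_def by (blast intro: norm_bound_mdiff)
  moreover have "mdiff (amp n (\<lambda>k l. \<Theta> (x k l))) (amp n (\<lambda>k l. \<Phi> (x k l)))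
      = amp n (\<lambda>k l i j. \<Theta> (x k l) i j - \<Phi> (x k l) i j)"
    by (auto simp: amp_def mdiff_def fun_eq_iff)
  ultimately show "norm_bound (amp n (\<lambda>k l i j. \<Theta> (x k l) i j - \<Phi> (x k l) i j)) ((K1 + K2) * M)"
    by (simp add: distrib_right)
qed

lemma norm_bound_amp_1_iff: "norm_bound (amp 1 (\<lambda>_ _. T)) M \<longleftrightarrow> norm_bound T M"
proof
  assume "norm_bound (amp 1 (\<lambda>_ _. T)) M"
  then have "norm_bound (reindex_mat UNIV UNIV (\<lambda>i. (i, 0)) (\<lambda>i. (i, 0)) (amp 1 (\<lambda>_ _. T))) M"
    by (rule norm_bound_reindex_mat[rotated 2]) (auto simp: inj_on_def)
  then show "norm_bound T M"
    by (simp add: reindex_mat_def amp_def)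
next
  have "amp 1 (\<lambda>_ _. T) = reindex_mat (UNIV \<times> {0}) (UNIV \<times> {0}) fst fst T"
    by (auto simp: reindex_mat_def amp_def fun_eq_iff)
  moreover assume "norm_bound T M"
  ultimately show "norm_bound (amp 1 (\<lambda>_ _. T)) M"
    by (auto intro: norm_bound_reindex_mat simp: inj_on_def)
qed

lemma completely_bounded_by_norm_bound:
  assumes "completely_bounded_by \<Theta> K" and "norm_bound T M"
  shows "norm_bound (\<Theta> T) (K * M)"
proof -
  have "norm_bound (amp 1 (\<lambda>_ _. T)) M"
    using assms(2) by (simp only: norm_bound_amp_1_iff)
  then have "norm_bound (amp 1 (\<lambda>_ _. \<Theta> T)) (K * M)"
    using assms(1) unfolding completely_bounded_by_def by blast
  then show ?thesis
    by (simp only: norm_bound_amp_1_iff)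
qed

lemma completely_bounded_by_imp_completely_bounded:
  fixes \<Theta> :: "'i mat \<Rightarrow> 'j mat"
  assumes "completely_bounded_by \<Theta> K" and "X \<subseteq> Collect bounded_mat"
  shows "completely_bounded \<Theta> X"
  unfolding completely_bounded_def
proof (intro exI allI impI)
  fix n :: nat and x :: "nat \<Rightarrow> nat \<Rightarrow> 'i mat"
  assume "\<forall>k l. k < n \<longrightarrow> l < n \<longrightarrow> x k l \<in> X"
  then have "bounded_mat (amp n x)"
    using assms(2) by (blast intro: bounded_mat_amp)
  then have "norm_bound (amp n (\<lambda>k l. \<Theta> (x k l))) (K * opnorm (amp n x))"
    using assms(1) norm_bound_opnorm unfolding completely_bounded_by_def by blast
  then show "opnorm (amp n (\<lambda>k l. \<Theta> (x k l))) \<le> K * opnorm (amp n x)"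
    by (rule opnorm_le)
qed

lemma completely_bounded_cong:
  assumes "\<And>x. x \<in> X \<Longrightarrow> \<Phi> x = \<Theta> x" and "completely_bounded \<Theta> X"
  shows "completely_bounded \<Phi> X"
proof -
  obtain K where K: "\<forall>n x. (\<forall>k l. k < n \<longrightarrow> l < n \<longrightarrow> x k l \<in> X) \<longrightarrow>
      opnorm (amp n (\<lambda>k l. \<Theta> (x k l))) \<le> K * opnorm (amp n x)"
    using assms(2) unfolding completely_bounded_def by blast
  have "amp n (\<lambda>k l. \<Phi> (x k l)) = amp n (\<lambda>k l. \<Theta> (x k l))"
    if "\<forall>k l. k < n \<longrightarrow> l < n \<longrightarrow> x k l \<in> X" for n x
    using that assms(1) by (auto simp: amp_def fun_eq_iff)
  with K show ?thesis
    unfolding completely_bounded_def by auto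
qed

section \<open>Spans and norm closures\<close>

lemma mspan_superset: "m \<in> S \<Longrightarrow> m \<in> mspan S"
  unfolding mspan_def by (intro CollectI exI[of _ "{m}"] exI[of _ "\<lambda>_. 1"]) auto

lemma mspanE:
  assumes "T \<in> mspan S"
  obtains F c where "finite F" "F \<subseteq> S" "T = (\<lambda>i j. \<Sum>m\<in>F. c m * m i j)"
  using assms unfolding mspan_def by blast

lemma mspan_bounded: "S \<subseteq> Collect bounded_mat \<Longrightarrow> T \<in> mspan S \<Longrightarrow> bounded_mat T"
  by (erule mspanE) (auto intro!: bounded_mat_sum bounded_mat_scale)

lemma mspan_lincomb:
  assumes "x \<in> mspan S" "y \<in> mspan S"
  shows "(\<lambda>i j. a * x i j + b * y i j) \<in> mspan S"
proof -
  obtain F c where F: "finite F" "F \<subseteq> S" "x = (\<lambda>i j. \<Sum>m\<in>F. c m * m i j)"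
    using assms(1) by (rule mspanE)
  obtain G d where G: "finite G" "G \<subseteq> S" "y = (\<lambda>i j. \<Sum>m\<in>G. d m * m i j)"
    using assms(2) by (rule mspanE)
  define e where "e m = a * (if m \<in> F then c m else 0) + b * (if m \<in> G then d m else 0)" for m
  have "(\<Sum>m\<in>F \<union> G. (if m \<in> F then c m else 0) * m i j) = x i j"
    and "(\<Sum>m\<in>F \<union> G. (if m \<in> G then d m else 0) * m i j) = y i j" for i j
    unfolding F(3) G(3) using F(1) G(1) by (auto intro: sum.mono_neutral_cong_right)
  moreover have "(\<Sum>m\<in>F \<union> G. e m * m i j) = a * (\<Sum>m\<in>F \<union> G. (if m \<in> F then c m else 0) * m i j)
      + b * (\<Sum>m\<in>F \<union> G. (if m \<in> G then d m else 0) * m i j)" for i j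
    by (simp add: e_def sum.distrib sum_distrib_left distrib_right mult.assoc)
  ultimately have "(\<lambda>i j. a * x i j + b * y i j) = (\<lambda>i j. \<Sum>m\<in>F \<union> G. e m * m i j)"
    by simp
  then show ?thesis
    unfolding mspan_def using F G by blast
qed

lemma mclosureI:
  "bounded_mat T \<Longrightarrow> (\<And>n. s n \<in> X) \<Longrightarrow> (\<lambda>n. opnorm (mdiff (s n) T)) \<longlonglongrightarrow> 0 \<Longrightarrow> T \<in> mclosure X"
  unfolding mclosure_def by blast

lemma mclosureE:
  assumes "T \<in> mclosure X"
  obtains s where "\<And>n. s n \<in> X" "(\<lambda>n. opnorm (mdiff (s n) T)) \<longlonglongrightarrow> 0"
  using assms unfolding mclosure_def by blast

lemma mclosure_bounded: "T \<in> mclosure X \<Longrightarrow> bounded_mat T"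
  unfolding mclosure_def by blast

lemma mclosure_superset: "X \<subseteq> Collect bounded_mat \<Longrightarrow> T \<in> X \<Longrightarrow> T \<in> mclosure X"
  by (rule mclosureI[of _ "\<lambda>_. T"]) (auto simp: mdiff_def opnorm_zero)

lemma opnorm_tendsto_zero_comparison:
  assumes "\<And>n. bounded_mat (A n)" "\<And>n. opnorm (A n) \<le> b n" "b \<longlonglongrightarrow> 0"
  shows "(\<lambda>n. opnorm (A n)) \<longlonglongrightarrow> 0"
  by (rule tendsto_sandwich[OF always_eventually always_eventually tendsto_const assms(3)])
    (auto intro: opnorm_nonneg assms)

lemma mclosure_closed_limit:
  assumes X: "X \<subseteq> Collect bounded_mat" and T: "bounded_mat T"
    and s: "\<And>n. s n \<in> mclosure X" and lim: "(\<lambda>n. opnorm (mdiff (s n) T)) \<longlonglongrightarrow> 0"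
  shows "T \<in> mclosure X"
proof -
  have "\<exists>r\<in>X. opnorm (mdiff r (s n)) < inverse (real (Suc n))" for n
  proof -
    obtain q where q: "\<And>m. q m \<in> X" "(\<lambda>m. opnorm (mdiff (q m) (s n))) \<longlonglongrightarrow> 0"
      using mclosureE[OF s[of n]] by blast
    have "eventually (\<lambda>m. opnorm (mdiff (q m) (s n)) < inverse (real (Suc n))) sequentially"
      using q(2) by (rule order_tendstoD(2)) simp
    then obtain m where "opnorm (mdiff (q m) (s n)) < inverse (real (Suc n))"
      by (auto simp: eventually_sequentially)
    with q(1) show ?thesis
      by blast
  qed
  then obtain r where r: "\<And>n. r n \<in> X" "\<And>n. opnorm (mdiff (r n) (s n)) < inverse (real (Suc n))"
    by metis
  have bounded: "bounded_mat (r n)" "bounded_mat (s n)" for n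
    using r(1) X s mclosure_bounded by blast+
  show ?thesis
  proof (rule mclosureI[OF T r(1) opnorm_tendsto_zero_comparison])
    show "bounded_mat (mdiff (r n) T)" for n
      using bounded(1) T by (rule bounded_mat_mdiff)
    show "opnorm (mdiff (r n) T) \<le> inverse (real (Suc n)) + opnorm (mdiff (s n) T)" for n
      using opnorm_mdiff_triangle[OF bounded(1)[of n] bounded(2)[of n] T] r(2)[of n] by linarith
    show "(\<lambda>n. inverse (real (Suc n)) + opnorm (mdiff (s n) T)) \<longlonglongrightarrow> 0"
      using tendsto_add[OF LIMSEQ_inverse_real_of_nat lim] by simp
  qed
qed

lemma mclosure_mspan_lincomb:
  assumes S: "S \<subseteq> Collect bounded_mat" and x: "x \<in> mclosure (mspan S)" and y: "y \<in> mclosure (mspan S)"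
  shows "(\<lambda>i j. a * x i j + b * y i j) \<in> mclosure (mspan S)"
proof -
  obtain s where s: "\<And>n. s n \<in> mspan S" "(\<lambda>n. opnorm (mdiff (s n) x)) \<longlonglongrightarrow> 0"
    using mclosureE[OF x] by blast
  obtain r where r: "\<And>n. r n \<in> mspan S" "(\<lambda>n. opnorm (mdiff (r n) y)) \<longlonglongrightarrow> 0"
    using mclosureE[OF y] by blast
  have bounded: "bounded_mat x" "bounded_mat y" "bounded_mat (s n)" "bounded_mat (r n)" for n
    using x y s(1) r(1) mclosure_bounded mspan_bounded[OF S] by blast+
  have diff: "mdiff (\<lambda>i j. a * s n i j + b * r n i j) (\<lambda>i j. a * x i j + b * y i j)
      = (\<lambda>i j. a * mdiff (s n) x i j + b * mdiff (r n) y i j)" for n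
    by (auto simp: mdiff_def algebra_simps)
  show ?thesis
  proof (rule mclosureI[OF _ mspan_lincomb[OF s(1) r(1)] opnorm_tendsto_zero_comparison])
    show "bounded_mat (\<lambda>i j. a * x i j + b * y i j)"
      using bounded by (intro bounded_mat_lincomb)
    show "bounded_mat (mdiff (\<lambda>i j. a * s n i j + b * r n i j) (\<lambda>i j. a * x i j + b * y i j))" for n
      unfolding diff using bounded by (intro bounded_mat_lincomb bounded_mat_mdiff)
    show "opnorm (mdiff (\<lambda>i j. a * s n i j + b * r n i j) (\<lambda>i j. a * x i j + b * y i j))
        \<le> cmod a * opnorm (mdiff (s n) x) + cmod b * opnorm (mdiff (r n) y)" for n
      unfolding diff using bounded
      by (intro opnorm_le norm_bound_add norm_bound_scale norm_bound_opnorm bounded_mat_mdiff)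
    show "(\<lambda>n. cmod a * opnorm (mdiff (s n) x) + cmod b * opnorm (mdiff (r n) y)) \<longlonglongrightarrow> 0"
      using tendsto_add[OF tendsto_mult_right_zero[OF s(2)] tendsto_mult_right_zero[OF r(2)]] by simp
  qed
qed

lemma mclosure_mspan_sum:
  assumes S: "S \<subseteq> Collect bounded_mat" and "finite F" "\<And>m. m \<in> F \<Longrightarrow> G m \<in> mclosure (mspan S)"
  shows "(\<lambda>i j. \<Sum>m\<in>F. c m * G m i j) \<in> mclosure (mspan S)"
  using assms(2,3)
proof (induction F rule: finite_induct)
  case empty
  have "(\<lambda>i j. 0) \<in> mspan S"
    unfolding mspan_def by (intro CollectI exI[of _ "{}"]) auto
  then show ?case
    using mclosure_superset[of "mspan S"] mspan_bounded[OF S] by auto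
next
  case (insert m F)
  then have "(\<lambda>i j. c m * G m i j + 1 * (\<Sum>m\<in>F. c m * G m i j)) \<in> mclosure (mspan S)"
    by (intro mclosure_mspan_lincomb[OF S]) auto
  with insert show ?case
    by simp
qed

lemma complex_linear_onD:
  "complex_linear_on \<Theta> UNIV \<Longrightarrow> \<Theta> (\<lambda>i j. a * x i j + b * y i j) = (\<lambda>i j. a * \<Theta> x i j + b * \<Theta> y i j)"
  unfolding complex_linear_on_def by blast

lemma complex_linear_on_sum:
  assumes "complex_linear_on \<Theta> UNIV" and "finite F"
  shows "\<Theta> (\<lambda>i j. \<Sum>m\<in>F. c m * m i j) = (\<lambda>i j. \<Sum>m\<in>F. c m * \<Theta> m i j)"
  using assms(2)
proof (induction F rule: finite_induct)
  case empty
  have "\<Theta> (\<lambda>i j. 0 * m i j + 0 * m i j) = (\<lambda>i j. 0 * \<Theta> m i j + 0 * \<Theta> m i j)" for m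
    using assms(1) by (rule complex_linear_onD)
  then show ?case
    by simp
next
  case (insert m F)
  have "\<Theta> (\<lambda>i j. c m * m i j + 1 * (\<Sum>m\<in>F. c m * m i j)) = (\<lambda>i j. c m * \<Theta> m i j + 1 * \<Theta> (\<lambda>i j. \<Sum>m\<in>F. c m * m i j) i j)"
    using assms(1) by (rule complex_linear_onD)
  with insert show ?case
    by simp
qed

lemma complex_linear_on_mdiff:
  "complex_linear_on \<Theta> UNIV \<Longrightarrow> \<Theta> (mdiff A B) = mdiff (\<Theta> A) (\<Theta> B)"
  using complex_linear_onD[of \<Theta> 1 A "-1" B] by (simp add: mdiff_def)

lemma complex_linear_on_comp:
  "complex_linear_on \<Theta> UNIV \<Longrightarrow> complex_linear_on \<Phi> UNIV \<Longrightarrow> complex_linear_on (\<lambda>x. \<Theta> (\<Phi> x)) UNIV"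
  unfolding complex_linear_on_def by simp

lemma mclosure_mspan_image:
  assumes lin: "complex_linear_on \<Theta> UNIV"
    and bound: "\<And>T M. norm_bound T M \<Longrightarrow> norm_bound (\<Theta> T) (K * M)"
    and S: "S \<subseteq> Collect bounded_mat" and W: "W \<subseteq> Collect bounded_mat"
    and gen: "\<And>m. m \<in> S \<Longrightarrow> \<Theta> m \<in> mclosure (mspan W)"
    and T: "T \<in> mclosure (mspan S)"
  shows "\<Theta> T \<in> mclosure (mspan W)"
proof -
  have span: "\<Theta> x \<in> mclosure (mspan W)" if x: "x \<in> mspan S" for x
  proof -
    obtain F c where "finite F" "F \<subseteq> S" "x = (\<lambda>i j. \<Sum>m\<in>F. c m * m i j)"
      using x by (rule mspanE)
    then show ?thesis
      using gen by (auto simp: complex_linear_on_sum[OF lin] intro!: mclosure_mspan_sum[OF W])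
  qed
  obtain s where s: "\<And>n. s n \<in> mspan S" "(\<lambda>n. opnorm (mdiff (s n) T)) \<longlonglongrightarrow> 0"
    using mclosureE[OF T] by blast
  have bounded: "bounded_mat T" "bounded_mat (s n)" for n
    using T s(1) mclosure_bounded mspan_bounded[OF S] by blast+
  have diff_bound: "norm_bound (mdiff (\<Theta> (s n)) (\<Theta> T)) (K * opnorm (mdiff (s n) T))" for n
    unfolding complex_linear_on_mdiff[OF lin, symmetric]
    by (intro bound norm_bound_opnorm bounded_mat_mdiff bounded)
  show ?thesis
  proof (rule mclosure_closed_limit[OF _ _ span[OF s(1)] opnorm_tendsto_zero_comparison])
    show "mspan W \<subseteq> Collect bounded_mat"
      using mspan_bounded[OF W] by blast
    show "bounded_mat (\<Theta> T)"
      using bound[OF norm_bound_opnorm[OF bounded(1)]] bounded_mat_def by blast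
    show "bounded_mat (mdiff (\<Theta> (s n)) (\<Theta> T))" for n
      using diff_bound bounded_mat_def by blast
    show "opnorm (mdiff (\<Theta> (s n)) (\<Theta> T)) \<le> K * opnorm (mdiff (s n) T)" for n
      using diff_bound by (rule opnorm_le)
    show "(\<lambda>n. K * opnorm (mdiff (s n) T)) \<longlonglongrightarrow> 0"
      using tendsto_mult_right_zero[OF s(2)] by simp
  qed
qed

lemma mclosure_mspan_entry_eq_0:
  assumes S: "S \<subseteq> Collect bounded_mat" and zero: "\<And>m. m \<in> S \<Longrightarrow> m i j = 0"
    and T: "T \<in> mclosure (mspan S)"
  shows "T i j = 0"
proof -
  have span_zero: "x i j = 0" if "x \<in> mspan S" for x
    using that zero by (elim mspanE) (force intro!: sum.neutral)
  obtain s where s: "\<And>n. s n \<in> mspan S" "(\<lambda>n. opnorm (mdiff (s n) T)) \<longlonglongrightarrow> 0"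
    using mclosureE[OF T] by blast
  have "cmod (T i j) \<le> opnorm (mdiff (s n) T)" for n
  proof -
    have "bounded_mat (mdiff (s n) T)"
      using T s(1) mclosure_bounded mspan_bounded[OF S] by (blast intro: bounded_mat_mdiff)
    then show ?thesis
      using norm_bound_entry[OF norm_bound_opnorm, of "mdiff (s n) T" i j] span_zero[OF s(1)]
      by (simp add: mdiff_def)
  qed
  then have "cmod (T i j) \<le> 0"
    by (intro LIMSEQ_le_const[OF s(2)]) blast
  then show ?thesis
    by simp
qed

lemma kron_apply: "kron a b p q = a (fst p) (fst q) * b (snd p) (snd q)"
  by (simp add: kron_def case_prod_beta)

text \<open>Agrees with the identity on \<^const>\<open>column_space\<close> but makes
  \<open>a \<mapsto> kron (first_column a) b\<close> bounded on all matrices.\<close>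

definition first_column :: "nat mat \<Rightarrow> nat mat" where
  "first_column a = (\<lambda>i k. if k = 0 then a i 0 else 0)"

lemma norm_bound_kron_first_column:
  fixes a :: "nat mat" and b :: "'j mat"
  assumes a: "norm_bound a M1" and b: "norm_bound b M2"
  shows "norm_bound (kron (first_column a) b) (M1 * M2)"
proof (rule norm_boundI)
  show "0 \<le> M1 * M2"
    using a b by (simp add: norm_bound_nonneg)
  fix S F :: "(nat \<times> 'j) set" and f :: "nat \<times> 'j \<Rightarrow> complex"
  assume fin: "finite S" "finite F"
  define V where "V = snd ` S"
  define g where "g v = (if (0, v) \<in> S then f (0, v) else 0)" for v
  define h where "h w = (\<Sum>v\<in>V. b w v * g v)" for w
  have fin': "finite (fst ` F)" "finite (snd ` F)" "finite V"
    using fin unfolding V_def by auto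
  have row: "(\<Sum>y\<in>S. kron (first_column a) b (i, w) y * f y) = a i 0 * h w" for i w
  proof -
    have "(\<Sum>y\<in>S. kron (first_column a) b (i, w) y * f y)
        = (\<Sum>y\<in>S. if fst y = 0 then a i 0 * (b w (snd y) * f (0, snd y)) else 0)"
      by (intro sum.cong) (auto simp: kron_apply first_column_def)
    also have "\<dots> = a i 0 * h w"
      unfolding V_def h_def g_def by (subst sum_fst_fiber[OF fin(1)]) (auto simp: sum_distrib_left intro!: sum.cong)
    finally show ?thesis .
  qed
  have column: "(\<Sum>i\<in>fst ` F. (cmod (a i 0))\<^sup>2) \<le> M1\<^sup>2"
    using a fin'(1) by (rule norm_bound_column)
  have "(\<Sum>w\<in>snd ` F. (cmod (h w))\<^sup>2) \<le> M2\<^sup>2 * (\<Sum>y\<in>S. (cmod (f y))\<^sup>2)"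
    using norm_boundD[OF b fin'(3) fin'(2), of g] sum_slice_le[OF fin(1), of 0 f]
    unfolding h_def g_def V_def by (meson mult_left_mono order.trans zero_le_power2)
  have "(\<Sum>x\<in>F. (cmod (\<Sum>y\<in>S. kron (first_column a) b x y * f y))\<^sup>2)
      = (\<Sum>(i, w)\<in>F. (cmod (a i 0))\<^sup>2 * (cmod (h w))\<^sup>2)"
    using row by (intro sum.cong) (auto simp: norm_mult power_mult_distrib)
  also have "\<dots> \<le> (\<Sum>(i, w)\<in>fst ` F \<times> snd ` F. (cmod (a i 0))\<^sup>2 * (cmod (h w))\<^sup>2)"
    using fin' by (intro sum_mono2) (auto intro: rev_image_eqI)
  also have "\<dots> = (\<Sum>i\<in>fst ` F. (cmod (a i 0))\<^sup>2) * (\<Sum>w\<in>snd ` F. (cmod (h w))\<^sup>2)"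
    by (simp add: sum_product sum.cartesian_product)
  also have "\<dots> \<le> M1\<^sup>2 * (M2\<^sup>2 * (\<Sum>y\<in>S. (cmod (f y))\<^sup>2))"
    using column \<open>(\<Sum>w\<in>snd ` F. (cmod (h w))\<^sup>2) \<le> _\<close> by (intro mult_mono) (auto intro: sum_nonneg)
  finally show "(\<Sum>x\<in>F. (cmod (\<Sum>y\<in>S. kron (first_column a) b x y * f y))\<^sup>2) \<le> (M1 * M2)\<^sup>2 * (\<Sum>y\<in>S. (cmod (f y))\<^sup>2)"
    by (simp add: power_mult_distrib mult.assoc)
qed

lemma complex_linear_kron_right: "complex_linear_on (kron a) UNIV"
  by (auto simp: complex_linear_on_def kron_def fun_eq_iff algebra_simps)

lemma complex_linear_kron_first_column: "complex_linear_on (\<lambda>a. kron (first_column a) b) UNIV"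
  by (auto simp: complex_linear_on_def kron_def first_column_def fun_eq_iff algebra_simps)

lemma first_column_unit_mat: "first_column (unit_mat i 0) = unit_mat i 0"
  by (auto simp: first_column_def unit_mat_def fun_eq_iff)

lemma norm_bound_Lop: "norm_bound (Lop x) 1"
proof -
  have "Lop x = reindex_mat (range ((@) x)) UNIV (drop (length x)) id id_mat"
    by (auto simp: Lop_def reindex_mat_def id_mat_def fun_eq_iff)
  then show ?thesis
    by (auto intro!: norm_bound_reindex_mat norm_bound_id_mat simp: inj_on_def)
qed

lemma norm_bound_unit_mat: "norm_bound (unit_mat a b) 1"
proof -
  have "unit_mat a b = reindex_mat {a} {b} (\<lambda>_. ()) (\<lambda>_. ()) id_mat"
    by (auto simp: unit_mat_def reindex_mat_def id_mat_def fun_eq_iff)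
  then show ?thesis
    by (auto intro!: norm_bound_reindex_mat norm_bound_id_mat)
qed

lemma range_Lop_bounded: "range Lop \<subseteq> Collect bounded_mat"
  using norm_bound_Lop bounded_mat_def by blast

lemma unit_mats_bounded: "{unit_mat i 0 | i. True} \<subseteq> Collect bounded_mat"
  using norm_bound_unit_mat bounded_mat_def by blast

lemma A_inf_bounded: "A_inf \<subseteq> Collect bounded_mat"
  unfolding A_inf_def using mclosure_bounded by blast

lemma Lop_in_A_inf: "Lop x \<in> A_inf"
  unfolding A_inf_def using range_Lop_bounded by (auto intro: mclosure_superset mspan_superset mspan_bounded)

lemma unit_mat_in_column_space: "unit_mat i 0 \<in> column_space"
  unfolding column_space_def using unit_mats_bounded by (auto intro: mclosure_superset mspan_superset mspan_bounded)

lemma A_inf_Nil_entry_eq_0: "a \<in> A_inf \<Longrightarrow> v \<noteq> [] \<Longrightarrow> a [] v = 0"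
  unfolding A_inf_def by (erule mclosure_mspan_entry_eq_0[OF range_Lop_bounded, rotated]) (auto simp: Lop_def)

lemma column_space_entry_eq_0: "a \<in> column_space \<Longrightarrow> k \<noteq> 0 \<Longrightarrow> a i k = 0"
  unfolding column_space_def
  by (erule mclosure_mspan_entry_eq_0[OF unit_mats_bounded, rotated]) (auto simp: unit_mat_def)

lemma first_column_column_space: "a \<in> column_space \<Longrightarrow> first_column a = a"
  by (auto simp: first_column_def column_space_entry_eq_0 fun_eq_iff)

lemma spatial_tensor_bounded: "spatial_tensor X Y \<subseteq> Collect bounded_mat"
  unfolding spatial_tensor_def using mclosure_bounded by blast

lemma kron_column_space_bounded:
  assumes "Y \<subseteq> Collect bounded_mat"
  shows "{kron a b | a b. a \<in> column_space \<and> b \<in> Y} \<subseteq> Collect bounded_mat"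
proof clarify
  fix a b
  assume a: "a \<in> column_space" and b: "b \<in> Y"
  have "bounded_mat a"
    using a unfolding column_space_def by (rule mclosure_bounded)
  moreover have "bounded_mat b"
    using b assms by blast
  ultimately obtain M1 M2 where "norm_bound a M1" "norm_bound b M2"
    unfolding bounded_mat_def by blast
  then have "norm_bound (kron (first_column a) b) (M1 * M2)"
    by (rule norm_bound_kron_first_column)
  then show "bounded_mat (kron a b)"
    unfolding first_column_column_space[OF a] bounded_mat_def by blast
qed

lemma spatial_tensor_column_space_entry_eq_0:
  assumes "Y \<subseteq> Collect bounded_mat" "t \<in> spatial_tensor column_space Y" "k \<noteq> 0"
  shows "t p (k, v) = 0"
  using assms(2) unfolding spatial_tensor_def
proof (rule mclosure_mspan_entry_eq_0[OF kron_column_space_bounded[OF assms(1)], rotated])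
  fix m
  assume "m \<in> {kron a b | a b. a \<in> column_space \<and> b \<in> Y}"
  then obtain a b where "m = kron a b" "a \<in> column_space"
    by blast
  then show "m p (k, v) = 0"
    using column_space_entry_eq_0[OF _ assms(3)] by (simp add: kron_apply)
qed

lemma spatial_tensor_A_inf_entry_eq_0:
  assumes "t \<in> spatial_tensor column_space A_inf" "v \<noteq> []"
  shows "t (i, []) (k, v) = 0"
  using assms(1) unfolding spatial_tensor_def
proof (rule mclosure_mspan_entry_eq_0[OF kron_column_space_bounded[OF A_inf_bounded], rotated])
  fix m
  assume "m \<in> {kron a b | a b. a \<in> column_space \<and> b \<in> A_inf}"
  then obtain a b where "m = kron a b" "b \<in> A_inf"
    by blast
  then show "m (i, []) (k, v) = 0"
    using A_inf_Nil_entry_eq_0[OF _ assms(2)] by (simp add: kron_apply)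
qed

section \<open>Words as pairs\<close>

fun word_of_pair :: "nat \<times> nat list \<Rightarrow> nat list" where
  "word_of_pair (0, []) = []"
| "word_of_pair (0, j # w) = 2 * j # w"
| "word_of_pair (Suc j, w) = Suc (2 * j) # w"

fun pair_of_word :: "nat list \<Rightarrow> nat \<times> nat list" where
  "pair_of_word [] = (0, [])"
| "pair_of_word (h # w) = (if even h then (0, h div 2 # w) else (Suc (h div 2), w))"

lemma pair_of_word_word_of_pair [simp]: "pair_of_word (word_of_pair p) = p"
  by (induction p rule: word_of_pair.induct) auto

lemma word_of_pair_pair_of_word [simp]: "word_of_pair (pair_of_word x) = x"
  by (cases x rule: pair_of_word.cases) (auto elim: evenE oddE)

lemma word_of_pair_eq_iff: "word_of_pair p = x \<longleftrightarrow> p = pair_of_word x"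
  by auto

lemma pair_of_word_eq_iff: "pair_of_word x = p \<longleftrightarrow> x = word_of_pair p"
  by auto

lemma word_of_pair_eq_Nil_iff: "word_of_pair p = [] \<longleftrightarrow> p = (0, [])"
  by (auto simp: word_of_pair_eq_iff)

lemma word_of_pair_append: "(i, y) \<noteq> (0, []) \<Longrightarrow> word_of_pair (i, y @ v) = word_of_pair (i, y) @ v"
  by (cases "(i, y)" rule: word_of_pair.cases) auto

lemma word_of_pair_inject [simp]: "word_of_pair p = word_of_pair q \<longleftrightarrow> p = q"
  by (metis pair_of_word_word_of_pair)

lemma pair_of_word_inject [simp]: "pair_of_word x = pair_of_word y \<longleftrightarrow> x = y"
  by (metis word_of_pair_pair_of_word)

section \<open>The isomorphism\<close>

text \<open>The first term relabels rows by \<^const>\<open>word_of_pair\<close>; the other two replace the image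
  of the identity part \<open>a [] [] \<cdot> 1\<close> by \<open>a [] [] \<cdot> (e\<^sub>0\<^sub>0 \<otimes> 1)\<close>.\<close>

definition to_tensor :: "nat list mat \<Rightarrow> (nat \<times> nat list) mat" where
  "to_tensor = (\<lambda>a p q.
       compress (- {(0, [])}) ({0} \<times> UNIV) (\<lambda>p. (word_of_pair p, ())) (\<lambda>q. (snd q, ())) a p q
     + compress ({0} \<times> UNIV) ({0} \<times> UNIV) (\<lambda>p. ([], snd p)) (\<lambda>q. ([], snd q)) a p q
     - compress (- {(0, [])}) ({0} \<times> UNIV) (\<lambda>p. ([], word_of_pair p)) (\<lambda>q. ([], snd q)) a p q)"

definition from_tensor :: "(nat \<times> nat list) mat \<Rightarrow> nat list mat" where
  "from_tensor = (\<lambda>t x v.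
       compress (- {[]}) UNIV (\<lambda>x. (pair_of_word x, ())) (\<lambda>v. ((0, v), ())) t x v
     + compress UNIV UNIV (\<lambda>x. ((0, []), x)) (\<lambda>v. ((0, []), v)) t x v
     - compress (- {[]}) UNIV (\<lambda>x. ((0, []), pair_of_word x)) (\<lambda>v. ((0, []), (0, v))) t x v)"

lemma to_tensor_apply:
  "to_tensor a (i, w) (k, v) =
     (if k = 0 then (if (i, w) \<noteq> (0, []) then a (word_of_pair (i, w)) v else 0)
        + (if i = 0 \<and> w = v then a [] [] else 0)
        - (if (i, w) \<noteq> (0, []) \<and> word_of_pair (i, w) = v then a [] [] else 0)
      else 0)"
  by (simp add: to_tensor_def compress_apply)

lemma from_tensor_apply:
  "from_tensor t x v =
     (if x \<noteq> [] then t (pair_of_word x) (0, v) else 0)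
     + (if x = v then t (0, []) (0, []) else 0)
     - (if x \<noteq> [] \<and> pair_of_word x = (0, v) then t (0, []) (0, []) else 0)"
  by (simp add: from_tensor_def compress_apply)

lemma complex_linear_to_tensor: "complex_linear_on to_tensor UNIV"
  by (auto simp: complex_linear_on_def to_tensor_def compress_apply fun_eq_iff algebra_simps)

lemma complex_linear_from_tensor: "complex_linear_on from_tensor UNIV"
  by (auto simp: complex_linear_on_def from_tensor_def compress_apply fun_eq_iff algebra_simps)

lemma completely_bounded_by_to_tensor: "completely_bounded_by to_tensor 3"
proof -
  have "completely_bounded_by to_tensor (1 + 1 + 1)"
    unfolding to_tensor_def
    by (intro completely_bounded_by_add completely_bounded_by_diff completely_bounded_by_compress)
      (auto simp: inj_on_def)
  then show ?thesis
    by simp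
qed

lemma completely_bounded_by_from_tensor: "completely_bounded_by from_tensor 3"
proof -
  have "completely_bounded_by from_tensor (1 + 1 + 1)"
    unfolding from_tensor_def
    by (intro completely_bounded_by_add completely_bounded_by_diff completely_bounded_by_compress)
      (auto simp: inj_on_def)
  then show ?thesis
    by simp
qed

lemma from_tensor_to_tensor:
  assumes "\<And>v. v \<noteq> [] \<Longrightarrow> a [] v = 0"
  shows "from_tensor (to_tensor a) = a"
proof (intro ext)
  fix x v
  show "from_tensor (to_tensor a) x v = a x v"
  proof (cases "x = []")
    case True
    then show ?thesis
      using assms[of v] by (cases "v = []") (auto simp: from_tensor_apply to_tensor_apply)
  next
    case False
    then obtain i w where "x = word_of_pair (i, w)" "(i, w) \<noteq> (0, [])"
      by (metis word_of_pair_pair_of_word word_of_pair_eq_Nil_iff surj_pair)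
    then show ?thesis
      by (auto simp: from_tensor_apply to_tensor_apply word_of_pair_eq_Nil_iff)
  qed
qed

lemma to_tensor_from_tensor:
  assumes "\<And>p k v. k \<noteq> 0 \<Longrightarrow> t p (k, v) = 0"
    and "\<And>i k v. v \<noteq> [] \<Longrightarrow> t (i, []) (k, v) = 0"
  shows "to_tensor (from_tensor t) = t"
proof (intro ext)
  fix p q :: "nat \<times> nat list"
  obtain i w k v where pq: "p = (i, w)" "q = (k, v)"
    by fastforce
  show "to_tensor (from_tensor t) p q = t p q"
  proof (cases "k = 0 \<and> (i, w) = (0, [])")
    case True
    then show ?thesis
      using assms(2)[of v 0 0] unfolding pq
      by (cases "v = []") (auto simp: to_tensor_apply from_tensor_apply)
  next
    case False
    then show ?thesis
      using assms(1) unfolding pq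
      by (auto simp: to_tensor_apply from_tensor_apply word_of_pair_eq_Nil_iff word_of_pair_eq_iff)
  qed
qed

lemma kron_unit_mat_Lop:
  "kron (unit_mat i 0) (Lop y) p (k, v) = (if k = 0 \<and> p = (i, y @ v) then 1 else 0)"
  by (simp add: kron_apply unit_mat_def Lop_def prod_eq_iff)

lemma to_tensor_Lop: "to_tensor (Lop (word_of_pair (i, y))) = kron (unit_mat i 0) (Lop y)"
proof (intro ext)
  fix p q :: "nat \<times> nat list"
  obtain i' w k v where pq: "p = (i', w)" "q = (k, v)"
    by fastforce
  show "to_tensor (Lop (word_of_pair (i, y))) p q = kron (unit_mat i 0) (Lop y) p q"
  proof (cases "(i, y) = (0, [])")
    case True
    then show ?thesis
      unfolding pq kron_unit_mat_Lop by (auto simp: to_tensor_apply Lop_def)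
  next
    case False
    then have "Lop (word_of_pair (i, y)) [] [] = 0"
      by (simp add: Lop_def word_of_pair_eq_Nil_iff)
    moreover have "Lop (word_of_pair (i, y)) (word_of_pair (i', w)) v = (if (i', w) = (i, y @ v) then 1 else 0)"
      using False by (simp add: Lop_def flip: word_of_pair_append)
    ultimately show ?thesis
      using False unfolding pq by (auto simp: to_tensor_apply kron_unit_mat_Lop)
  qed
qed

lemma from_tensor_kron_Lop: "from_tensor (kron (unit_mat i 0) (Lop y)) = Lop (word_of_pair (i, y))"
proof (intro ext)
  fix x v
  show "from_tensor (kron (unit_mat i 0) (Lop y)) x v = Lop (word_of_pair (i, y)) x v"
  proof (cases "(i, y) = (0, [])")
    case True
    then show ?thesis
      unfolding from_tensor_apply kron_unit_mat_Lop by (auto simp: Lop_def)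
  next
    case False
    then have "x = word_of_pair (i, y) @ v \<longleftrightarrow> x \<noteq> [] \<and> pair_of_word x = (i, y @ v)"
      by (auto simp: pair_of_word_eq_iff word_of_pair_eq_Nil_iff simp flip: word_of_pair_append)
    with False show ?thesis
      unfolding from_tensor_apply kron_unit_mat_Lop by (auto simp: Lop_def)
  qed
qed

lemma to_tensor_in_spatial_tensor:
  assumes "a \<in> A_inf"
  shows "to_tensor a \<in> spatial_tensor column_space A_inf"
  unfolding spatial_tensor_def
proof (rule mclosure_mspan_image[OF complex_linear_to_tensor _ range_Lop_bounded
      kron_column_space_bounded[OF A_inf_bounded]])
  show "norm_bound (to_tensor T) (3 * M)" if "norm_bound T M" for T M
    using completely_bounded_by_to_tensor that by (rule completely_bounded_by_norm_bound)
  show "to_tensor m \<in> mclosure (mspan {kron a b | a b. a \<in> column_space \<and> b \<in> A_inf})"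
    if "m \<in> range Lop" for m
  proof -
    obtain i y where "m = Lop (word_of_pair (i, y))"
      using \<open>m \<in> range Lop\<close> by (metis rangeE word_of_pair_pair_of_word surj_pair)
    then have "to_tensor m \<in> {kron a b | a b. a \<in> column_space \<and> b \<in> A_inf}"
      using to_tensor_Lop unit_mat_in_column_space Lop_in_A_inf by blast
    then show ?thesis
      using kron_column_space_bounded[OF A_inf_bounded]
      by (auto intro: mclosure_superset mspan_superset mspan_bounded)
  qed
  show "a \<in> mclosure (mspan (range Lop))"
    using assms unfolding A_inf_def .
qed

lemma from_tensor_kron_unit_mat_in_A_inf:
  assumes "b \<in> A_inf"
  shows "from_tensor (kron (unit_mat i 0) b) \<in> A_inf"
  unfolding A_inf_def
proof (rule mclosure_mspan_image[OF complex_linear_on_comp[OF complex_linear_from_tensor complex_linear_kron_right]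
      _ range_Lop_bounded range_Lop_bounded])
  show "norm_bound (from_tensor (kron (unit_mat i 0) T)) (3 * M)" if "norm_bound T M" for T M
    using completely_bounded_by_norm_bound[OF completely_bounded_by_from_tensor
        norm_bound_kron_first_column[OF norm_bound_unit_mat[of i 0] that]]
    by (simp add: first_column_unit_mat)
  show "from_tensor (kron (unit_mat i 0) m) \<in> mclosure (mspan (range Lop))" if "m \<in> range Lop" for m
    using that from_tensor_kron_Lop Lop_in_A_inf unfolding A_inf_def by auto
  show "b \<in> mclosure (mspan (range Lop))"
    using assms unfolding A_inf_def .
qed

lemma from_tensor_kron_in_A_inf:
  assumes a: "a \<in> column_space" and b: "b \<in> A_inf"
  shows "from_tensor (kron a b) \<in> A_inf"
proof -
  obtain Mb where Mb: "norm_bound b Mb"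
    using b A_inf_bounded bounded_mat_def by blast
  have "from_tensor (kron (first_column a) b) \<in> mclosure (mspan (range Lop))"
  proof (rule mclosure_mspan_image[OF complex_linear_on_comp[OF complex_linear_from_tensor
        complex_linear_kron_first_column] _ unit_mats_bounded range_Lop_bounded])
    show "norm_bound (from_tensor (kron (first_column T) b)) (3 * Mb * M)" if "norm_bound T M" for T M
      using completely_bounded_by_norm_bound[OF completely_bounded_by_from_tensor
          norm_bound_kron_first_column[OF that Mb]]
      by (simp add: mult_ac)
    show "from_tensor (kron (first_column m) b) \<in> mclosure (mspan (range Lop))"
      if "m \<in> {unit_mat i 0 | i. True}" for m
      using that from_tensor_kron_unit_mat_in_A_inf[OF b] unfolding A_inf_def by (auto simp: first_column_unit_mat)
    show "a \<in> mclosure (mspan {unit_mat i 0 | i. True})"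
      using a unfolding column_space_def .
  qed
  then show ?thesis
    using first_column_column_space[OF a] unfolding A_inf_def by simp
qed

lemma from_tensor_in_A_inf:
  assumes "t \<in> spatial_tensor column_space A_inf"
  shows "from_tensor t \<in> A_inf"
  unfolding A_inf_def
proof (rule mclosure_mspan_image[OF complex_linear_from_tensor _
      kron_column_space_bounded[OF A_inf_bounded] range_Lop_bounded])
  show "norm_bound (from_tensor T) (3 * M)" if "norm_bound T M" for T M
    using completely_bounded_by_from_tensor that by (rule completely_bounded_by_norm_bound)
  show "from_tensor m \<in> mclosure (mspan (range Lop))"
    if "m \<in> {kron a b | a b. a \<in> column_space \<and> b \<in> A_inf}" for m
    using that from_tensor_kron_in_A_inf unfolding A_inf_def by blast
  show "t \<in> mclosure (mspan {kron a b | a b. a \<in> column_space \<and> b \<in> A_inf})"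
    using assms unfolding spatial_tensor_def .
qed

lemma from_tensor_to_tensor_A_inf: "a \<in> A_inf \<Longrightarrow> from_tensor (to_tensor a) = a"
  by (intro from_tensor_to_tensor A_inf_Nil_entry_eq_0)

lemma to_tensor_from_tensor_spatial_tensor:
  assumes t: "t \<in> spatial_tensor column_space A_inf"
  shows "to_tensor (from_tensor t) = t"
proof (rule to_tensor_from_tensor)
  show "t p (k, v) = 0" if "k \<noteq> 0" for p k v
    using spatial_tensor_column_space_entry_eq_0[OF A_inf_bounded t that] .
  show "t (i, []) (k, v) = 0" if "v \<noteq> []" for i k v
    using spatial_tensor_A_inf_entry_eq_0[OF t that] .
qed

lemma bij_betw_to_tensor: "bij_betw to_tensor A_inf (spatial_tensor column_space A_inf)"
  by (rule bij_betw_byWitness[where f'=from_tensor])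
    (use from_tensor_to_tensor_A_inf to_tensor_from_tensor_spatial_tensor
       to_tensor_in_spatial_tensor from_tensor_in_A_inf in blast)+

lemma inv_into_to_tensor:
  assumes "t \<in> spatial_tensor column_space A_inf"
  shows "inv_into A_inf to_tensor t = from_tensor t"
  using bij_betw_imp_inj_on[OF bij_betw_to_tensor] from_tensor_in_A_inf[OF assms]
    to_tensor_from_tensor_spatial_tensor[OF assms]
  by (metis inv_into_f_eq)

theorem proposition14:
  shows "completely_isomorphic A_inf (spatial_tensor column_space A_inf)"
proof -
  have "completely_bounded from_tensor (spatial_tensor column_space A_inf)"
    using completely_bounded_by_from_tensor spatial_tensor_bounded
    by (rule completely_bounded_by_imp_completely_bounded)
  then have "completely_bounded (inv_into A_inf to_tensor) (spatial_tensor column_space A_inf)"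
    using inv_into_to_tensor by (blast intro: completely_bounded_cong)
  moreover have "completely_bounded to_tensor A_inf"
    using completely_bounded_by_to_tensor A_inf_bounded
    by (rule completely_bounded_by_imp_completely_bounded)
  moreover have "complex_linear_on to_tensor A_inf"
    using complex_linear_to_tensor by (simp add: complex_linear_on_def)
  ultimately show ?thesis
    unfolding completely_isomorphic_def using bij_betw_to_tensor by blast
qed

end
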